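(* Consider the scalar model $x=y+w$ with $w\sim\mathcal{N}(0,1)$ independent of $y$, and the prior $y\sim\mathcal{N}(0,\rho)$, where $\rho>0$ is an SNR parameter. A linear estimator $\hat y = a\,x$ is learned from $N$ i.i.d. training samples $y_1,\dots,y_N$ drawn from this prior, with full knowledge of the measurement model (infinitely many measurements per sample, $M\to\infty$). The linear bias constrained estimator with hyperparameter $\lambda\geq 0$, denoted $\mathrm{LBCE}(\lambda)$, uses the coefficient $$a_{\mathrm{LBCE}}(\lambda)=\frac{\overline{y^2}}{\overline{y^2}+\frac{1}{\lambda+1}},\qquad \overline{y^2}=\frac{1}{N}\sum_{i=1}^N y_i^2 .$$ Let $\mathrm{BMSE}_N$ denote the Bayesian mean squared error $\mathrm{E}\left[(a_{\mathrm{LBCE}}(\lambda)\,x-y)^2\right]$, where the expectation is over $y\sim\mathcal{N}(0,\rho)$, over $w$, and also over the random sampling of the training set $y_1,\dots,y_N$. Then, for a large enough $\rho$, there exists $\lambda^*>0$ such that $\mathrm{LBCE}(\lambda^* )$ yields a smaller $\mathrm{BMSE}_N$ than that of $\mathrm{LBCE}(\lambda=0)$.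
   Context: Semi data-driven setting: the likelihood $p(x|y)$ is known exactly, $y$ is random but its prior is only partially known through a finite dataset of $N$ samples. $\mathrm{LBCE}(\lambda=0)$ coincides with the linear MMSE estimator fitted to the empirical prior. The bias constrained objective is the empirical mean squared error plus $\lambda$ times the empirical squared bias. *)

theory Defs
  imports "HOL-Probability.Probability"
begin

(* Gaussian law N(0,v) with variance v (normal_density takes the standard deviation) *)
definition gauss :: "real \<Rightarrow> real measure" where
  "gauss v = density lborel (normal_density 0 (sqrt v))"

definition emp_sq :: "nat \<Rightarrow> (nat \<Rightarrow> real) \<Rightarrow> real" where
  "emp_sq N ys = (\<Sum>i<N. (ys i)\<^sup>2) / real N"

definition a_LBCE :: "real \<Rightarrow> real \<Rightarrow> real" where
  "a_LBCE lam s = s / (s + 1 / (lam + 1))"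

(* Bayesian MSE, averaged over the training set ys (N i.i.d. N(0,rho) samples),
   the test prior y ~ N(0,rho) and the noise w ~ N(0,1); as an extended nonnegative
   real (nonnegative integral), so an infinite BMSE is represented faithfully. *)
definition BMSE :: "nat \<Rightarrow> real \<Rightarrow> real \<Rightarrow> ennreal" where
  "BMSE N rho lam =
     (\<integral>\<^sup>+ ys. (\<integral>\<^sup>+ y. (\<integral>\<^sup>+ w.
        ennreal ((a_LBCE lam (emp_sq N ys) * (y + w) - y)\<^sup>2) \<partial>gauss 1) \<partial>gauss rho)
      \<partial>(PiM {..<N} (\<lambda>_. gauss rho)))"

end

theory Submission
  imports Defs "HOL-Real_Asymp.Real_Asymp"
begin

text \<open>For a fixed training set the risk of \<open>a x\<close> depends only on the empirical second moment \<open>s\<close>: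
  with \<open>c = 1 / (\<lambda> + 1)\<close> it is \<open>(c^2 \<rho> + s^2) / (s + c)^2\<close>. Take \<open>\<lambda> = 1 / (\<rho> - 1)\<close>, i.e.
  \<open>c = 1 - e\<close> with \<open>e = 1 / \<rho>\<close>. In the variable \<open>t = s / \<rho>\<close>, whose law does not depend on \<open>\<rho>\<close>
  and has mean 1, the risk reduction is \<open>e^2 gain(t)\<close>, where \<open>gain(t)\<close> exceeds the affine function
  \<open>2 (1 - t)\<close> up to an \<open>O(e)\<close> error, except for a loss of at most 2 on the event \<open>t < sqrt e\<close>, and
  by at least 1 on \<open>t \<in> [1/4, 1/2]\<close>. As \<open>2 (1 - t)\<close> has mean zero, the expected reduction is at
  least \<open>e^2 (P(t \<in> [1/4, 1/2]) - 2 P(t < sqrt e) - O(e))\<close>: the first probability is bounded below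
  uniformly in \<open>\<rho>\<close>, while the second is \<open>O(e^(1/4))\<close>.\<close>

section \<open>The centred Gaussian law\<close>

lemma space_gauss [simp]: "space (gauss v) = UNIV"
  by (simp add: gauss_def)

lemma sets_gauss [simp, measurable_cong]: "sets (gauss v) = sets borel"
  by (simp add: gauss_def)

lemma prob_space_gauss: "0 < v \<Longrightarrow> prob_space (gauss v)"
  unfolding gauss_def by (rule prob_space_normal_density) simp

lemma has_bochner_integral_gauss_id:
  assumes "0 < v"
  shows "has_bochner_integral (gauss v) (\<lambda>x. x) 0"
  using normal_moment_odd[of "sqrt v" 0 0] assms
  by (simp add: gauss_def has_bochner_integral_density)

lemma has_bochner_integral_gauss_square:
  assumes "0 < v"
  shows "has_bochner_integral (gauss v) (\<lambda>x. x\<^sup>2) v"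
  using normal_moment_even[of "sqrt v" 0 1] assms
  by (simp add: gauss_def has_bochner_integral_density)

lemma has_bochner_integral_gauss_quadratic:
  assumes "0 < v"
  shows "has_bochner_integral (gauss v) (\<lambda>w. p + q * w + r * w\<^sup>2) (p + r * v)"
proof -
  interpret prob_space "gauss v"
    using assms by (rule prob_space_gauss)
  have "has_bochner_integral (gauss v) (\<lambda>w. p + q * w + r * w\<^sup>2) (p + q * 0 + r * v)"
    using prob_space
    by (intro has_bochner_integral_add has_bochner_integral_mult_right has_bochner_integral_gauss_id
        has_bochner_integral_gauss_square assms) (simp add: has_bochner_integral_iff)
  then show ?thesis
    by simp
qed

lemma nn_integral_gauss_quadratic:
  assumes "0 < v" and "\<And>w. 0 \<le> p + q * w + r * w\<^sup>2"
  shows "(\<integral>\<^sup>+ w. ennreal (p + q * w + r * w\<^sup>2) \<partial>gauss v) = ennreal (p + r * v)"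
  using has_bochner_integral_gauss_quadratic[OF assms(1)] assms(2)
  by (simp add: has_bochner_integral_iff nn_integral_eq_integral)

lemma measure_gauss_eq_integral:
  assumes "0 < v" "A \<in> sets borel"
  shows "measure (gauss v) A = (\<integral>x. normal_density 0 (sqrt v) x * indicator A x \<partial>lborel)"
proof -
  have "measure (gauss v) A = (\<integral>x. indicator A x \<partial>gauss v)"
    by simp
  also have "\<dots> = (\<integral>x. normal_density 0 (sqrt v) x * indicator A x \<partial>lborel)"
    unfolding gauss_def using assms by (subst integral_density) auto
  finally show ?thesis .
qed

lemma normal_density_0_sqrt:
  assumes "0 < v"
  shows "normal_density 0 (sqrt v) x = exp (- x\<^sup>2 / (2 * v)) / (sqrt (2 * pi) * sqrt v)"
  using assms by (simp add: normal_density_def real_sqrt_mult)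

lemma normal_density_le:
  assumes "0 < v"
  shows "normal_density 0 (sqrt v) x \<le> 1 / sqrt v"
proof -
  have "1 \<le> sqrt (2 * pi)"
    using pi_gt3 by simp
  then have "exp (- x\<^sup>2 / (2 * v)) / (sqrt (2 * pi) * sqrt v) \<le> 1 / (1 * sqrt v)"
    using assms by (intro frac_le mult_right_mono) auto
  then show ?thesis
    using assms by (simp add: normal_density_0_sqrt)
qed

lemma normal_density_ge:
  assumes "0 < v" "x\<^sup>2 \<le> v"
  shows "exp (-1) / (3 * sqrt v) \<le> normal_density 0 (sqrt v) x"
proof -
  have "sqrt (2 * pi) \<le> sqrt 9"
    using pi_less_4 by (intro real_sqrt_le_mono) simp
  then have "sqrt (2 * pi) \<le> 3"
    by simp
  moreover have "-1 \<le> - x\<^sup>2 / (2 * v)"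
    using assms by (simp add: field_simps)
  ultimately have "exp (-1) / (3 * sqrt v) \<le> exp (- x\<^sup>2 / (2 * v)) / (sqrt (2 * pi) * sqrt v)"
    using assms by (intro frac_le mult_right_mono) auto
  then show ?thesis
    using assms by (simp add: normal_density_0_sqrt)
qed

lemma measure_gauss_Icc_le:
  assumes "0 < v" "a \<le> b"
  shows "measure (gauss v) {a..b} \<le> (b - a) / sqrt v"
proof -
  have "measure (gauss v) {a..b} = (\<integral>x. normal_density 0 (sqrt v) x * indicator {a..b} x \<partial>lborel)"
    using assms(1) by (rule measure_gauss_eq_integral) simp
  also have "\<dots> \<le> (\<integral>x. 1 / sqrt v * indicator {a..b} x \<partial>lborel)"
  proof (rule integral_mono)
    show "integrable lborel (\<lambda>x. normal_density 0 (sqrt v) x * indicator {a..b} x)"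
      using assms(1) by (intro integrable_real_mult_indicator integrable_normal_density) simp_all
    show "integrable lborel (\<lambda>x. 1 / sqrt v * indicator {a..b} x)"
      by (intro integrable_mult_right integrable_real_indicator) (auto simp: emeasure_lborel_Icc_eq)
  qed (use normal_density_le[OF assms(1)] in \<open>simp add: indicator_def\<close>)
  also have "\<dots> = (b - a) / sqrt v"
    using assms(2) by simp
  finally show ?thesis .
qed

lemma measure_gauss_Icc_ge:
  assumes "0 < v" "0 \<le> a" "a \<le> b" "b \<le> sqrt v"
  shows "exp (-1) / (3 * sqrt v) * (b - a) \<le> measure (gauss v) {a..b}"
proof -
  have "exp (-1) / (3 * sqrt v) * (b - a) = (\<integral>x. exp (-1) / (3 * sqrt v) * indicator {a..b} x \<partial>lborel)"
    using assms(3) by simp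
  also have "\<dots> \<le> (\<integral>x. normal_density 0 (sqrt v) x * indicator {a..b} x \<partial>lborel)"
  proof (rule integral_mono)
    show "integrable lborel (\<lambda>x. normal_density 0 (sqrt v) x * indicator {a..b} x)"
      using assms(1) by (intro integrable_real_mult_indicator integrable_normal_density) simp_all
    show "integrable lborel (\<lambda>x. exp (-1) / (3 * sqrt v) * indicator {a..b} x)"
      by (intro integrable_mult_right integrable_real_indicator) (auto simp: emeasure_lborel_Icc_eq)
    fix x
    show "exp (-1) / (3 * sqrt v) * indicator {a..b} x \<le> normal_density 0 (sqrt v) x * indicator {a..b} x"
    proof (cases "x \<in> {a..b}")
      case True
      then have "x\<^sup>2 \<le> (sqrt v)\<^sup>2"
        using assms by (intro power_mono) auto
      then show ?thesis
        using True assms(1) normal_density_ge[OF assms(1), of x] by simp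
    qed simp
  qed
  also have "\<dots> = measure (gauss v) {a..b}"
    using assms(1) by (rule measure_gauss_eq_integral[symmetric]) simp
  finally show ?thesis .
qed

section \<open>Risk conditional on the training set\<close>

definition cond_risk :: "real \<Rightarrow> real \<Rightarrow> real \<Rightarrow> real" where
  "cond_risk lam rho s = (a_LBCE lam s - 1)\<^sup>2 * rho + (a_LBCE lam s)\<^sup>2"

lemma measurable_cond_risk [measurable]: "cond_risk lam rho \<in> borel_measurable borel"
  unfolding cond_risk_def a_LBCE_def by measurable

lemma cond_risk_nonneg: "0 \<le> rho \<Longrightarrow> 0 \<le> cond_risk lam rho s"
  by (simp add: cond_risk_def)

lemma cond_risk_le:
  assumes "0 \<le> s" "0 \<le> lam" "0 \<le> rho"
  shows "cond_risk lam rho s \<le> rho + 1"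
proof -
  have "0 \<le> a_LBCE lam s" "a_LBCE lam s \<le> 1"
    using assms by (simp_all add: a_LBCE_def add_nonneg_pos)
  then have "(a_LBCE lam s - 1)\<^sup>2 \<le> 1" "(a_LBCE lam s)\<^sup>2 \<le> 1"
    by (simp_all add: abs_le_iff power_le_one_iff abs_square_le_1)
  moreover from this(1) have "(a_LBCE lam s - 1)\<^sup>2 * rho \<le> rho"
    using assms(3) by (simp add: mult_left_le_one_le)
  ultimately show ?thesis
    unfolding cond_risk_def by linarith
qed

lemma cond_risk_eq:
  assumes "0 \<le> s" "0 \<le> lam"
  shows "cond_risk lam rho s = ((1 / (lam + 1))\<^sup>2 * rho + s\<^sup>2) / (s + 1 / (lam + 1))\<^sup>2"
proof -
  define c where "c = 1 / (lam + 1)"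
  have "0 < s + c"
    using assms by (simp add: c_def add_nonneg_pos)
  then have "a_LBCE lam s - 1 = - (c / (s + c))" and "a_LBCE lam s = s / (s + c)"
    by (simp_all add: a_LBCE_def c_def field_simps)
  then show ?thesis
    by (simp add: cond_risk_def c_def[symmetric] power_divide add_divide_distrib)
qed

abbreviation training_law :: "nat \<Rightarrow> real \<Rightarrow> (nat \<Rightarrow> real) measure" where
  "training_law N rho \<equiv> PiM {..<N} (\<lambda>_. gauss rho)"

lemma BMSE_eq_nn_integral_cond_risk:
  assumes "0 < rho"
  shows "BMSE N rho lam =
    (\<integral>\<^sup>+ ys. ennreal (cond_risk lam rho (emp_sq N ys)) \<partial>training_law N rho)"
proof -
  have "(\<integral>\<^sup>+ y. (\<integral>\<^sup>+ w. ennreal ((a * (y + w) - y)\<^sup>2) \<partial>gauss 1) \<partial>gauss rho)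
      = ennreal ((a - 1)\<^sup>2 * rho + a\<^sup>2)" for a
  proof -
    have square: "(a * (y + w) - y)\<^sup>2 = ((a - 1) * y)\<^sup>2 + (2 * (a - 1) * y * a) * w + a\<^sup>2 * w\<^sup>2" for y w
      by (simp add: power2_eq_square algebra_simps)
    have "(\<integral>\<^sup>+ w. ennreal ((a * (y + w) - y)\<^sup>2) \<partial>gauss 1) = ennreal (((a - 1) * y)\<^sup>2 + a\<^sup>2 * 1)" for y
      unfolding square by (rule nn_integral_gauss_quadratic)
        (simp_all only: square[symmetric] zero_le_power2 zero_less_one)
    also have "ennreal (((a - 1) * y)\<^sup>2 + a\<^sup>2 * 1) = ennreal (a\<^sup>2 + 0 * y + (a - 1)\<^sup>2 * y\<^sup>2)" for y
      by (simp add: power_mult_distrib add.commute)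
    finally have "(\<integral>\<^sup>+ y. (\<integral>\<^sup>+ w. ennreal ((a * (y + w) - y)\<^sup>2) \<partial>gauss 1) \<partial>gauss rho)
        = (\<integral>\<^sup>+ y. ennreal (a\<^sup>2 + 0 * y + (a - 1)\<^sup>2 * y\<^sup>2) \<partial>gauss rho)"
      by simp
    also have "\<dots> = ennreal (a\<^sup>2 + (a - 1)\<^sup>2 * rho)"
      by (rule nn_integral_gauss_quadratic[OF assms]) simp
    finally show ?thesis
      by (simp add: add.commute)
  qed
  then show ?thesis
    by (simp add: BMSE_def cond_risk_def)
qed

section \<open>The risk gain of shrinking the coefficient\<close>

definition risk_gain :: "real \<Rightarrow> real \<Rightarrow> real \<Rightarrow> real" where
  "risk_gain c e t = t * ((1 + c) * (1 - e) * t - 2 * t\<^sup>2 + 2 * c * e) / ((t + e) * (t + c * e))\<^sup>2"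

lemma cond_risk_diff_eq_risk_gain:
  assumes "0 < e" "0 \<le> t" "0 \<le> lam"
  shows "cond_risk 0 (1 / e) (t / e) - cond_risk lam (1 / e) (t / e)
    = e * (lam / (lam + 1)) * risk_gain (1 / (lam + 1)) e t"
proof -
  define c where "c = 1 / (lam + 1)"
  have c: "0 < c" "lam / (lam + 1) = 1 - c"
    using assms by (simp_all add: c_def field_simps)
  have "0 < t + e" "0 < t + c * e"
    using assms c by (simp_all add: add_nonneg_pos)
  have rescale: "(d\<^sup>2 * (1 / e) + (t / e)\<^sup>2) / (t / e + d)\<^sup>2 = (d\<^sup>2 * e + t\<^sup>2) / (t + d * e)\<^sup>2" for d
  proof -
    have "t / e + d = (t + d * e) / e" "d\<^sup>2 * (1 / e) + (t / e)\<^sup>2 = (d\<^sup>2 * e + t\<^sup>2) / e\<^sup>2"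
      using assms by (simp_all add: field_simps power2_eq_square)
    then have "(d\<^sup>2 * (1 / e) + (t / e)\<^sup>2) / (t / e + d)\<^sup>2 = ((d\<^sup>2 * e + t\<^sup>2) / e\<^sup>2) / ((t + d * e) / e)\<^sup>2"
      by (simp only:)
    also have "\<dots> = (d\<^sup>2 * e + t\<^sup>2) / (t + d * e)\<^sup>2"
      using assms by (simp add: power_divide)
    finally show ?thesis .
  qed
  have "(1\<^sup>2 * e + t\<^sup>2) / (t + 1 * e)\<^sup>2 - (c\<^sup>2 * e + t\<^sup>2) / (t + c * e)\<^sup>2
      = ((e + t\<^sup>2) * (t + c * e)\<^sup>2 - (c\<^sup>2 * e + t\<^sup>2) * (t + e)\<^sup>2) / ((t + e) * (t + c * e))\<^sup>2"
    using \<open>0 < t + e\<close> \<open>0 < t + c * e\<close> by (simp add: diff_frac_eq power_mult_distrib)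
  also have "(e + t\<^sup>2) * (t + c * e)\<^sup>2 - (c\<^sup>2 * e + t\<^sup>2) * (t + e)\<^sup>2
      = e * (1 - c) * (t * ((1 + c) * (1 - e) * t - 2 * t\<^sup>2 + 2 * c * e))"
    by (simp add: power2_eq_square algebra_simps)
  finally show ?thesis
    using assms rescale[of 1] rescale[of c]
    by (simp add: cond_risk_eq c_def[symmetric] c(2) risk_gain_def)
qed

lemma risk_gain_ge_small:
  assumes "0 \<le> t" "t \<le> 1/4" "0 \<le> e" "0 \<le> c" "3/2 \<le> (1 + c) * (1 - e)"
  shows "t\<^sup>2 / ((t + e) * (t + c * e))\<^sup>2 \<le> risk_gain c e t"
proof -
  have "t * 1 \<le> t * ((1 + c) * (1 - e) - 2 * t)"
    using assms by (intro mult_left_mono) auto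
  moreover have "0 \<le> 2 * c * e"
    using assms by simp
  ultimately have "t * t \<le> t * ((1 + c) * (1 - e) * t - 2 * t\<^sup>2 + 2 * c * e)"
    using assms(1) by (intro mult_left_mono) (auto simp: power2_eq_square algebra_simps)
  then show ?thesis
    unfolding risk_gain_def by (simp add: power2_eq_square divide_right_mono)
qed

lemma two_le_risk_gain:
  assumes "0 \<le> t" "t \<le> 1/4" "0 < e" "e \<le> t\<^sup>2" "0 \<le> c" "c \<le> 1"
    and "3/2 \<le> (1 + c) * (1 - e)"
  shows "2 \<le> risk_gain c e t"
proof -
  define A where "A = (t + e) * (t + c * e)"
  have "t \<noteq> 0"
    using assms(3,4) by auto
  with assms(1) have "0 < t"
    by simp
  have "0 \<le> c * e" "c * e \<le> e"
    using assms by (simp_all add: mult_left_le_one_le)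
  have "t * t \<le> t * (1/4)"
    using assms by (intro mult_left_mono) auto
  with assms(4) \<open>c * e \<le> e\<close> have "t + e \<le> 5/4 * t" "t + c * e \<le> 5/4 * t"
    by (simp_all add: power2_eq_square)
  then have "A \<le> (5/4 * t) * (5/4 * t)"
    unfolding A_def using assms \<open>0 < t\<close> by (intro mult_mono) auto
  moreover have "0 < A"
    unfolding A_def using \<open>0 < t\<close> \<open>0 < e\<close> \<open>0 \<le> c * e\<close> by simp
  ultimately have "A\<^sup>2 \<le> ((5/4 * t) * (5/4 * t))\<^sup>2"
    by (intro power_mono) auto
  moreover have "t\<^sup>2 \<le> (1/4)\<^sup>2"
    using assms by (intro power_mono) auto
  then have "625/128 * t\<^sup>2 * t\<^sup>2 \<le> 1 * t\<^sup>2"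
    by (intro mult_right_mono) (simp_all add: power_divide)
  ultimately have "2 * A\<^sup>2 \<le> t\<^sup>2"
    by (simp add: power2_eq_square)
  with \<open>0 < A\<close> have "2 \<le> t\<^sup>2 / A\<^sup>2"
    by (simp add: pos_le_divide_eq)
  also have "\<dots> \<le> risk_gain c e t"
    unfolding A_def using assms \<open>0 < t\<close> by (intro risk_gain_ge_small) auto
  finally show ?thesis .
qed

text \<open>The right-hand side is the numerator of \<open>(risk_gain c e t - (1 + c - 2 t) / t\<^sup>2) / e\<close>
  over the denominator \<open>t\<^sup>2 A\<^sup>2\<close>.\<close>

lemma risk_gain_limit_numerator_ge:
  fixes t e c :: real
  assumes "1/4 \<le> t" "0 < e" "e \<le> 1" "0 < c" "c \<le> 1"
  defines "A \<equiv> (t + e) * (t + c * e)"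
  shows "-20000 * (t\<^sup>2 * A\<^sup>2)
    \<le> 2 * c * t ^ 3 - (1 + c) * t ^ 4 - (1 + c - 2 * t) * (((1 + c) * t + c * e) * (A + t\<^sup>2))"
    (is "_ \<le> ?W")
proof -
  define X where "X = ((1 + c) * t + c * e) * (A + t\<^sup>2)"
  have "0 < t"
    using assms(1) by simp
  have "c * e \<le> 1" "(1 + c) * t \<le> 2 * t"
    using assms by (simp_all add: mult_le_one)
  then have factor: "0 \<le> (1 + c) * t + c * e" "(1 + c) * t + c * e \<le> 6 * t"
    using assms by (simp, linarith)
  have "t\<^sup>2 \<le> A" "A \<le> (5 * t) * (5 * t)"
    unfolding A_def power2_eq_square using assms \<open>0 < t\<close> \<open>c * e \<le> 1\<close> by (intro mult_mono; simp)+
  then have "0 \<le> A + t\<^sup>2" "A + t\<^sup>2 \<le> 26 * t\<^sup>2"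
    by (simp_all add: power2_eq_square add_nonneg_nonneg)
  with factor have "0 \<le> X" "X \<le> (6 * t) * (26 * t\<^sup>2)"
    unfolding X_def using \<open>0 < t\<close> by (simp, intro mult_mono) simp_all
  then have "(1 + c) * t ^ 4 \<le> 2 * t ^ 4" "(1 + c) * X \<le> 2 * X" "0 \<le> 2 * c * t ^ 3" "0 \<le> 2 * t * X"
    "X \<le> 156 * t ^ 3"
    using assms \<open>0 < t\<close> by (simp_all add: mult_right_mono power2_eq_square power3_eq_cube)
  moreover have "?W = 2 * c * t ^ 3 - (1 + c) * t ^ 4 - (1 + c) * X + 2 * t * X"
    unfolding X_def by (simp add: algebra_simps)
  ultimately have "-(2 * t ^ 4 + 312 * t ^ 3) \<le> ?W"
    by linarith
  moreover have "t ^ 3 * 1 \<le> t ^ 3 * (t ^ 3 * 64)" "t ^ 4 * 1 \<le> t ^ 4 * (t\<^sup>2 * 16)"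
    using assms power_mono[of "1/4" t 3] power_mono[of "1/4" t 2] \<open>0 < t\<close>
    by (intro mult_left_mono; simp add: power_divide)+
  then have "t ^ 3 \<le> 64 * t ^ 6" "t ^ 4 \<le> 16 * t ^ 6"
    by (simp_all add: mult.assoc[symmetric] power_add[symmetric] mult.commute)
  moreover have "(t\<^sup>2)\<^sup>2 \<le> A\<^sup>2"
    using \<open>t\<^sup>2 \<le> A\<close> by (intro power_mono) simp_all
  then have "t ^ 6 \<le> t\<^sup>2 * A\<^sup>2"
    using mult_left_mono[of "t ^ 4" "A\<^sup>2" "t\<^sup>2"] by (simp add: power_add[symmetric])
  ultimately show ?thesis
    by linarith
qed

lemma risk_gain_ge_limit:
  assumes "1/4 \<le> t" "0 < e" "e \<le> 1" "0 < c" "c \<le> 1"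
  shows "(1 + c - 2 * t) / t\<^sup>2 - 20000 * e \<le> risk_gain c e t"
proof -
  define A where "A = (t + e) * (t + c * e)"
  define W where "W = 2 * c * t ^ 3 - (1 + c) * t ^ 4 - (1 + c - 2 * t) * (((1 + c) * t + c * e) * (A + t\<^sup>2))"
  have "0 < t"
    using assms(1) by simp
  then have "0 < A"
    unfolding A_def using assms by (intro mult_pos_pos add_pos_pos) auto
  have "risk_gain c e t - (1 + c - 2 * t) / t\<^sup>2 = e * W / (t\<^sup>2 * A\<^sup>2)"
    using \<open>0 < t\<close> \<open>0 < A\<close> unfolding risk_gain_def W_def A_def
    by (simp add: field_simps) (simp add: algebra_simps power2_eq_square power3_eq_cube power4_eq_xxxx)
  moreover have "e * (-20000 * (t\<^sup>2 * A\<^sup>2)) \<le> e * W"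
    using assms risk_gain_limit_numerator_ge[OF assms] by (intro mult_left_mono) (simp_all add: A_def W_def)
  then have "-20000 * e \<le> e * W / (t\<^sup>2 * A\<^sup>2)"
    using \<open>0 < t\<close> \<open>0 < A\<close> by (simp add: le_divide_eq algebra_simps)
  ultimately show ?thesis
    by linarith
qed

lemma risk_gain_ge_affine_large:
  assumes "0 < e" "e \<le> 1/16" "1/4 \<le> t"
  shows "2 * (1 - t) + indicator {1/4..1/2} t - 20016 * e \<le> risk_gain (1 - e) e t"
proof -
  have "0 < t"
    using assms(3) by simp
  have "(1 + (1 - e) - 2 * t) / t\<^sup>2 - 20000 * e \<le> risk_gain (1 - e) e t"
    using assms by (intro risk_gain_ge_limit) auto
  moreover have "(1 + (1 - e) - 2 * t) / t\<^sup>2 = 2 * (1 - t) + 2 * (1 - t)\<^sup>2 * (1 + t) / t\<^sup>2 - e / t\<^sup>2"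
    using \<open>0 < t\<close> by (simp add: field_simps power2_eq_square)
  moreover have "e / t\<^sup>2 \<le> 16 * e"
    using assms(1,3) power_mono[of "1/4" t 2] by (simp add: divide_le_eq power_divide)
  moreover have "indicator {1/4..1/2} t \<le> 2 * (1 - t)\<^sup>2 * (1 + t) / t\<^sup>2"
  proof (cases "t \<le> 1/2")
    case True
    have "t\<^sup>2 \<le> (1/2)\<^sup>2" "(1/2)\<^sup>2 \<le> (1 - t)\<^sup>2"
      using True \<open>0 < t\<close> by (intro power_mono; simp)+
    then have "t\<^sup>2 \<le> 2 * (1 - t)\<^sup>2 * (1 + t)"
      using \<open>0 < t\<close> mult_left_mono[of 1 "1 + t" "(1 - t)\<^sup>2"] by (simp add: power_divide)
    then show ?thesis
      using True assms(3) \<open>0 < t\<close> by (simp add: le_divide_eq)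
  qed simp
  ultimately show ?thesis
    by linarith
qed

lemma risk_gain_ge_affine:
  assumes "0 < e" "e \<le> 1/16" "0 \<le> t"
  shows "2 * (1 - t) + indicator {1/4..1/2} t - 2 * indicator {..<sqrt e} t - 20016 * e
    \<le> risk_gain (1 - e) e t"
proof -
  have "(1 + (1 - e)) * (1 - e) = 2 - 3 * e + e * e"
    by (simp add: algebra_simps)
  then have "3/2 \<le> (1 + (1 - e)) * (1 - e)"
    using assms(2) zero_le_square[of e] by linarith
  have "sqrt (1/16) = (1/4 :: real)"
    by (simp add: real_sqrt_divide)
  then have "sqrt e \<le> 1/4"
    using real_sqrt_le_mono[OF assms(2)] by linarith
  consider "t < sqrt e" | "sqrt e \<le> t" "t < 1/4" | "1/4 \<le> t"
    by linarith
  then show ?thesis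
  proof cases
    case 1
    with \<open>sqrt e \<le> 1/4\<close> have "t \<le> 1/4"
      by linarith
    then have "t\<^sup>2 / ((t + e) * (t + (1 - e) * e))\<^sup>2 \<le> risk_gain (1 - e) e t"
      using assms \<open>3/2 \<le> _\<close> by (intro risk_gain_ge_small) auto
    then have "0 \<le> risk_gain (1 - e) e t"
      by (meson order_trans divide_nonneg_nonneg zero_le_power2)
    then show ?thesis
      using 1 assms \<open>sqrt e \<le> 1/4\<close> by simp
  next
    case 2
    then have "e \<le> t\<^sup>2"
      using assms(1) real_sqrt_le_iff[of e "t\<^sup>2"] assms(3) by simp
    then have "2 \<le> risk_gain (1 - e) e t"
      using 2 assms \<open>3/2 \<le> _\<close> by (intro two_le_risk_gain) auto
    then show ?thesis
      using 2 assms by simp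
  next
    case 3
    then show ?thesis
      using risk_gain_ge_affine_large[OF assms(1,2)] \<open>sqrt e \<le> 1/4\<close> by simp
  qed
qed

lemma cond_risk_shrinkage_gain_ge:
  assumes "16 < rho" "0 \<le> s"
  shows "(2 * (1 - s / rho) + indicator {1/4..1/2} (s / rho) - 2 * indicator {..<sqrt (1 / rho)} (s / rho)
      - 20016 / rho) / rho\<^sup>2
    \<le> cond_risk 0 rho s - cond_risk (1 / (rho - 1)) rho s"
proof -
  define e where "e = 1 / rho"
  have e: "0 < e" "e \<le> 1/16" "1 / e = rho" "(s / rho) / e = s" "1 / (1 / (rho - 1) + 1) = 1 - e"
    "(1 / (rho - 1)) / (1 / (rho - 1) + 1) = e"
    using assms(1) by (simp_all add: e_def field_simps)
  have "cond_risk 0 (1 / e) ((s / rho) / e) - cond_risk (1 / (rho - 1)) (1 / e) ((s / rho) / e)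
      = e * ((1 / (rho - 1)) / (1 / (rho - 1) + 1)) * risk_gain (1 / (1 / (rho - 1) + 1)) e (s / rho)"
    using assms e(1) by (intro cond_risk_diff_eq_risk_gain) auto
  then have "cond_risk 0 rho s - cond_risk (1 / (rho - 1)) rho s = e\<^sup>2 * risk_gain (1 - e) e (s / rho)"
    by (simp only: e(3-6) power2_eq_square)
  moreover have "0 \<le> s / rho"
    using assms by simp
  then have "e\<^sup>2 * (2 * (1 - s / rho) + indicator {1/4..1/2} (s / rho) - 2 * indicator {..<sqrt e} (s / rho)
      - 20016 * e) \<le> e\<^sup>2 * risk_gain (1 - e) e (s / rho)"
    by (rule mult_left_mono[OF risk_gain_ge_affine[OF e(1,2)]]) simp_all
  ultimately show ?thesis
    by (simp add: e_def power_divide field_simps)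
qed

section \<open>The empirical second moment\<close>

lemma product_prob_space_gauss: "0 < v \<Longrightarrow> product_prob_space (\<lambda>_. gauss v)"
  by (intro product_prob_spaceI prob_space_gauss)

lemma emp_sq_nonneg: "0 \<le> emp_sq N ys"
  by (simp add: emp_sq_def sum_nonneg)

lemma measurable_emp_sq [measurable]: "emp_sq N \<in> borel_measurable (training_law N rho)"
  unfolding emp_sq_def by measurable

lemma has_bochner_integral_training_square:
  assumes "0 < v" "i < N"
  shows "has_bochner_integral (training_law N v) (\<lambda>ys. (ys i)\<^sup>2) v"
proof -
  have component: "(\<lambda>ys. ys i) \<in> measurable (training_law N v) (gauss v)"
    using assms(2) by (intro measurable_component_singleton) auto
  have square: "(\<lambda>x. x\<^sup>2) \<in> borel_measurable (gauss v)"
    by measurable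
  have "distr (training_law N v) (gauss v) (\<lambda>ys. ys i) = gauss v"
    using assms by (intro distr_PiM_component prob_space_gauss) auto
  then have "has_bochner_integral (distr (training_law N v) (gauss v) (\<lambda>ys. ys i)) (\<lambda>x. x\<^sup>2) v"
    using has_bochner_integral_gauss_square[OF assms(1)] by simp
  then show ?thesis
    by (simp add: has_bochner_integral_iff integrable_distr_eq[OF component square]
        integral_distr[OF component square])
qed

lemma has_bochner_integral_emp_sq:
  assumes "0 < v" "1 \<le> N"
  shows "has_bochner_integral (training_law N v) (emp_sq N) v"
proof -
  have "has_bochner_integral (training_law N v) (\<lambda>ys. (\<Sum>i<N. (ys i)\<^sup>2) / real N) ((\<Sum>i<N. v) / real N)"
    using assms by (intro has_bochner_integral_divide_zero has_bochner_integral_sum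
        has_bochner_integral_training_square) auto
  then show ?thesis
    using assms(2) by (simp add: emp_sq_def[abs_def])
qed

lemma (in finite_measure) has_bochner_integral_indicator_vimage:
  assumes "f \<in> borel_measurable M" "A \<in> sets borel"
  shows "has_bochner_integral M (\<lambda>x. indicator A (f x) :: real) (measure M {x \<in> space M. f x \<in> A})"
proof -
  have "{x \<in> space M. f x \<in> A} \<in> sets M"
    using assms by measurable
  then have "has_bochner_integral M (indicator {x \<in> space M. f x \<in> A}) (measure M {x \<in> space M. f x \<in> A})"
    by (intro has_bochner_integral_real_indicator) (simp_all add: top.not_eq_extremum[symmetric])
  then show ?thesis
    by (rule has_bochner_integral_cong[THEN iffD1, rotated -1]) (auto simp: indicator_def)
qed

lemma measure_emp_sq_less_le:
  assumes "0 < rho" "1 \<le> N" "0 \<le> d"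
  shows "measure (training_law N rho) {ys \<in> space (training_law N rho). emp_sq N ys / rho < d}
    \<le> 2 * sqrt (real N * d)"
proof -
  interpret product_prob_space "\<lambda>_. gauss rho" "{..<N}"
    using assms(1) by (rule product_prob_space_gauss)
  define r where "r = sqrt (real N * d * rho)"
  have "0 \<le> r"
    using assms by (simp add: r_def)
  have "{ys \<in> space (training_law N rho). emp_sq N ys / rho < d}
      \<subseteq> {ys \<in> space (training_law N rho). ys 0 \<in> {-r..r}}"
  proof safe
    fix ys
    assume "emp_sq N ys / rho < d"
    have "(ys 0)\<^sup>2 \<le> (\<Sum>i<N. (ys i)\<^sup>2)"
      using assms(2) by (intro member_le_sum) auto
    also have "\<dots> = real N * emp_sq N ys"
      using assms(2) by (simp add: emp_sq_def)
    also have "\<dots> \<le> r\<^sup>2"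
      using \<open>emp_sq N ys / rho < d\<close> assms by (simp add: r_def divide_less_eq)
    finally show "ys 0 \<in> {-r..r}"
      using \<open>0 \<le> r\<close> abs_le_square_iff[of "ys 0" r] by auto
  qed
  then have "measure (training_law N rho) {ys \<in> space (training_law N rho). emp_sq N ys / rho < d}
      \<le> measure (training_law N rho) {ys \<in> space (training_law N rho). ys 0 \<in> {-r..r}}"
    using assms(2) by (intro finite_measure_mono) measurable
  also have "\<dots> = measure (gauss rho) {-r..r}"
    using emeasure_PiM_Collect_single[of 0 "{-r..r}"] assms(2) by (simp add: measure_def)
  also have "\<dots> \<le> (r - - r) / sqrt rho"
    using assms(1) \<open>0 \<le> r\<close> by (intro measure_gauss_Icc_le) auto
  also have "\<dots> = 2 * sqrt (real N * d)"
    using assms(1) by (simp add: r_def real_sqrt_mult)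
  finally show ?thesis .
qed

lemma emp_sq_div_in_Icc:
  assumes "0 < rho" "1 \<le> N" "\<And>i. i < N \<Longrightarrow> ys i \<in> {sqrt rho / 2 .. 2 * sqrt rho / 3}"
  shows "emp_sq N ys / rho \<in> {1/4..1/2}"
proof -
  have bounds: "rho / 4 \<le> (ys i)\<^sup>2 \<and> (ys i)\<^sup>2 \<le> rho / 2" if "i < N" for i
  proof -
    have "0 \<le> sqrt rho / 2" "sqrt rho / 2 \<le> ys i" "ys i \<le> 2 * sqrt rho / 3"
      using assms(1) assms(3)[OF that] by auto
    then have "(sqrt rho / 2)\<^sup>2 \<le> (ys i)\<^sup>2" "(ys i)\<^sup>2 \<le> (2 * sqrt rho / 3)\<^sup>2"
      by (auto intro!: power_mono)
    then show ?thesis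
      using assms(1) by (simp add: power_divide power_mult_distrib)
  qed
  have "(\<Sum>i<N. rho / 4) \<le> (\<Sum>i<N. (ys i)\<^sup>2)" "(\<Sum>i<N. (ys i)\<^sup>2) \<le> (\<Sum>i<N. rho / 2)"
    using bounds by (meson lessThan_iff sum_mono)+
  then show ?thesis
    using assms(1,2) by (simp add: emp_sq_def field_simps)
qed

lemma measure_emp_sq_between_ge:
  assumes "0 < rho" "1 \<le> N"
  shows "(exp (-1) / 18) ^ N
    \<le> measure (training_law N rho) {ys \<in> space (training_law N rho). emp_sq N ys / rho \<in> {1/4..1/2}}"
proof -
  interpret product_prob_space "\<lambda>_. gauss rho" "{..<N}"
    using assms(1) by (rule product_prob_space_gauss)
  define I where "I = {sqrt rho / 2 .. 2 * sqrt rho / 3}"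
  define E where "E = {ys \<in> space (training_law N rho). \<forall>i\<in>{..<N}. ys i \<in> I}"
  have "exp (-1) / 18 \<le> measure (gauss rho) I"
    using measure_gauss_Icc_ge[OF assms(1), of "sqrt rho / 2" "2 * sqrt rho / 3"] assms(1)
    by (simp add: I_def)
  then have "(exp (-1) / 18) ^ N \<le> measure (gauss rho) I ^ N"
    by (intro power_mono) simp_all
  also have "\<dots> = measure (training_law N rho) E"
  proof -
    have "emeasure (training_law N rho) E = (\<Prod>i<N. emeasure (gauss rho) I)"
      unfolding E_def by (rule emeasure_PiM_Collect) (auto simp: I_def)
    also have "\<dots> = ennreal (measure (gauss rho) I ^ N)"
      by (simp add: M.emeasure_eq_measure ennreal_power)
    finally show ?thesis
      by (simp add: P.emeasure_eq_measure)
  qed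
  also have "\<dots> \<le> measure (training_law N rho) {ys \<in> space (training_law N rho). emp_sq N ys / rho \<in> {1/4..1/2}}"
    using emp_sq_div_in_Icc[OF assms] by (intro finite_measure_mono) (auto simp: E_def I_def)
  finally show ?thesis .
qed

section \<open>Comparison of the Bayesian risks\<close>

lemma integrable_cond_risk:
  assumes "0 < rho" "0 \<le> lam"
  shows "integrable (training_law N rho) (\<lambda>ys. cond_risk lam rho (emp_sq N ys))"
proof -
  interpret product_prob_space "\<lambda>_. gauss rho" "{..<N}"
    using assms(1) by (rule product_prob_space_gauss)
  show ?thesis
    using assms cond_risk_le[OF emp_sq_nonneg] cond_risk_nonneg
    by (intro integrable_const_bound[where B = "rho + 1"]) auto
qed

lemma BMSE_eq_integral_cond_risk:
  assumes "0 < rho" "0 \<le> lam"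
  shows "BMSE N rho lam = ennreal (\<integral>ys. cond_risk lam rho (emp_sq N ys) \<partial>training_law N rho)"
  unfolding BMSE_eq_nn_integral_cond_risk[OF assms(1)]
  using assms integrable_cond_risk cond_risk_nonneg by (intro nn_integral_eq_integral) auto

lemma expected_shrinkage_gain_ge:
  assumes "1 \<le> N" "16 < rho"
  shows "(measure (training_law N rho) {ys \<in> space (training_law N rho). emp_sq N ys / rho \<in> {1/4..1/2}}
      - 2 * measure (training_law N rho) {ys \<in> space (training_law N rho). emp_sq N ys / rho < sqrt (1 / rho)}
      - 20016 / rho) / rho\<^sup>2
    \<le> (\<integral>ys. cond_risk 0 rho (emp_sq N ys) \<partial>training_law N rho)
      - (\<integral>ys. cond_risk (1 / (rho - 1)) rho (emp_sq N ys) \<partial>training_law N rho)"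
    (is "?lower \<le> ?F0 - ?F1")
proof -
  let ?M = "training_law N rho"
  interpret product_prob_space "\<lambda>_. gauss rho" "{..<N}"
    using assms(2) by (intro product_prob_space_gauss) simp
  define T where "T ys = emp_sq N ys / rho" for ys
  define g where "g ys = (2 * (1 - T ys) + indicator {1/4..1/2} (T ys)
    - 2 * indicator {..<sqrt (1 / rho)} (T ys) - 20016 / rho) / rho\<^sup>2" for ys
  define p_mid where "p_mid = measure ?M {ys \<in> space ?M. T ys \<in> {1/4..1/2}}"
  define p_small where "p_small = measure ?M {ys \<in> space ?M. T ys \<in> {..<sqrt (1 / rho)}}"
  have "has_bochner_integral ?M (\<lambda>ys. emp_sq N ys / rho) (rho / rho)"
    using assms by (intro has_bochner_integral_divide_zero has_bochner_integral_emp_sq) auto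
  then have "has_bochner_integral ?M T 1"
    using assms(2) by (simp add: T_def[abs_def])
  moreover have "has_bochner_integral ?M (\<lambda>_. c) c" for c :: real
    using P.prob_space by (simp add: has_bochner_integral_iff)
  moreover have "T \<in> borel_measurable ?M"
    unfolding T_def by measurable
  ultimately have "has_bochner_integral ?M g ((2 * (1 - 1) + p_mid - 2 * p_small - 20016 / rho) / rho\<^sup>2)"
    unfolding g_def p_mid_def p_small_def
    by (intro has_bochner_integral_divide_zero has_bochner_integral_diff has_bochner_integral_add
        has_bochner_integral_mult_right P.has_bochner_integral_indicator_vimage) auto
  then have "?lower = integral\<^sup>L ?M g"
    by (simp add: has_bochner_integral_iff p_mid_def p_small_def T_def)
  also have "\<dots> \<le> (\<integral>ys. cond_risk 0 rho (emp_sq N ys) - cond_risk (1 / (rho - 1)) rho (emp_sq N ys) \<partial>?M)"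
  proof (rule integral_mono)
    show "integrable ?M g"
      using \<open>has_bochner_integral ?M g _\<close> by (simp add: has_bochner_integral_iff)
    show "integrable ?M (\<lambda>ys. cond_risk 0 rho (emp_sq N ys) - cond_risk (1 / (rho - 1)) rho (emp_sq N ys))"
      using assms(2) by (intro Bochner_Integration.integrable_diff integrable_cond_risk) auto
    show "g ys \<le> cond_risk 0 rho (emp_sq N ys) - cond_risk (1 / (rho - 1)) rho (emp_sq N ys)" for ys
      unfolding g_def T_def by (rule cond_risk_shrinkage_gain_ge[OF assms(2) emp_sq_nonneg])
  qed
  also have "\<dots> = ?F0 - ?F1"
    using assms(2) by (intro Bochner_Integration.integral_diff integrable_cond_risk) auto
  finally show ?thesis .
qed

lemma BMSE_shrinkage_lt:
  assumes "1 \<le> N" "16 < rho"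
    and "4 * sqrt (real N) * sqrt (sqrt (1 / rho)) + 20016 / rho < (exp (-1) / 18) ^ N"
  shows "BMSE N rho (1 / (rho - 1)) < BMSE N rho 0"
proof -
  let ?M = "training_law N rho"
  have "0 < rho"
    using assms(2) by simp
  have "measure ?M {ys \<in> space ?M. emp_sq N ys / rho < sqrt (1 / rho)} \<le> 2 * sqrt (real N * sqrt (1 / rho))"
    using \<open>0 < rho\<close> assms(1) by (intro measure_emp_sq_less_le) auto
  also have "\<dots> = 2 * sqrt (real N) * sqrt (sqrt (1 / rho))"
    by (simp add: real_sqrt_mult)
  finally have "0 < measure ?M {ys \<in> space ?M. emp_sq N ys / rho \<in> {1/4..1/2}}
      - 2 * measure ?M {ys \<in> space ?M. emp_sq N ys / rho < sqrt (1 / rho)} - 20016 / rho"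
    using measure_emp_sq_between_ge[OF \<open>0 < rho\<close> assms(1)] assms(3) by linarith
  with \<open>0 < rho\<close> have "0 < (measure ?M {ys \<in> space ?M. emp_sq N ys / rho \<in> {1/4..1/2}}
      - 2 * measure ?M {ys \<in> space ?M. emp_sq N ys / rho < sqrt (1 / rho)} - 20016 / rho) / rho\<^sup>2"
    by simp
  then have "(\<integral>ys. cond_risk (1 / (rho - 1)) rho (emp_sq N ys) \<partial>?M)
      < (\<integral>ys. cond_risk 0 rho (emp_sq N ys) \<partial>?M)"
    using expected_shrinkage_gain_ge[OF assms(1,2)] by linarith
  moreover have "0 \<le> (\<integral>ys. cond_risk (1 / (rho - 1)) rho (emp_sq N ys) \<partial>?M)"
    using \<open>0 < rho\<close> cond_risk_nonneg by (simp add: integral_nonneg)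
  ultimately show ?thesis
    using assms(2) \<open>0 < rho\<close> by (simp add: BMSE_eq_integral_cond_risk ennreal_less_iff)
qed

theorem theorem3:
  fixes N :: nat
  assumes "N \<ge> 1"
  shows "\<forall>\<^sub>F rho in at_top. \<exists>lam > 0. BMSE N rho lam < BMSE N rho 0"
proof -
  have "((\<lambda>rho. 4 * sqrt (real N) * sqrt (sqrt (1 / rho)) + 20016 / rho) \<longlongrightarrow> 0) at_top"
    by real_asymp
  then have "\<forall>\<^sub>F rho in at_top. 4 * sqrt (real N) * sqrt (sqrt (1 / rho)) + 20016 / rho < (exp (-1) / 18) ^ N"
    by (rule order_tendstoD) simp
  moreover have "\<forall>\<^sub>F rho in at_top. 16 < (rho :: real)"
    by (rule eventually_gt_at_top)
  ultimately show ?thesis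
  proof eventually_elim
    case (elim rho)
    then have "0 < 1 / (rho - 1)" "BMSE N rho (1 / (rho - 1)) < BMSE N rho 0"
      using assms by (auto intro: BMSE_shrinkage_lt)
    then show ?case
      by blast
  qed
qed

end
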